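(* For $n\ge 2$ let $$S_n^{(1)}(t):=\sum_{T\in\mathfrak{D}\mathfrak{T}^{\oplus}_n}t^{n_\ominus(T)},\qquad S_n^{(2)}(t):=\sum_{T\in\mathfrak{D}\mathfrak{T}^{\ominus}_n}t^{n_\ominus(T)},$$ and set $S_1^{(1)}(t)=S_1^{(2)}(t)=1$. Let $S_n(t)=\sum_{\pi\in\mathfrak{S}_n(2413,3142)}t^{\mathrm{des}(\pi)}$. Then for $n\geq2$, $$S_n^{(1)}(t)=\sum_{j=1}^{n-1}S_j(t)S_{n-j}^{(2)}(t)\qquad\text{and}\qquad S_n^{(2)}(t)=t\sum_{j=1}^{n-1}S_j(t)S_{n-j}^{(1)}(t).$$
   Context: $\mathfrak{S}_n(2413,3142)$ is the set of permutations of $[n]$ avoiding the patterns $2413$ and $3142$; $\mathrm{des}(\pi)=\#\{i\in[n-1]:\pi_i>\pi_{i+1}\}$. A binary tree is either empty or a root with a left and a right subtree, both binary trees. A right chain is a maximal sequence of nodes $v_1,\dots,v_l$ with $v_1$ the root or a left child and each $v_{j+1}$ the right child of $v_j$. A di-sk tree is a binary tree with nodes labelled $\oplus$ or $\ominus$ such that labels alternate along every right chain; $\mathfrak{D}\mathfrak{T}_n$ is the set of di-sk trees with $n-1$ nodes, $n_\ominus(T)$ the number of nodes labelled $\ominus$, and $\mathfrak{D}\mathfrak{T}^{\oplus}_n$ (resp. $\mathfrak{D}\mathfrak{T}^{\ominus}_n$) the set of trees in $\mathfrak{D}\mathfrak{T}_n$ whose root is labelled $\oplus$ (resp. $\ominus$).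 It is known that $S_n(t)=\sum_{T\in\mathfrak{D}\mathfrak{T}_n}t^{n_\ominus(T)}$. *)

theory Defs
  imports Main "HOL-Combinatorics.Multiset_Permutations"
begin

(* Permutations of [n] are represented as lists (one-line notation). *)

definition contains_pattern :: "nat list \<Rightarrow> nat list \<Rightarrow> bool" where
  "contains_pattern \<sigma> \<pi> \<longleftrightarrow>
     (\<exists>is. length is = length \<sigma> \<and> sorted_wrt (<) is \<and> (\<forall>k<length is. is ! k < length \<pi>) \<and>
        (\<forall>a<length is. \<forall>b<length is. (\<pi> ! (is ! a) < \<pi> ! (is ! b)) \<longleftrightarrow> (\<sigma> ! a < \<sigma> ! b)))"

definition avoids :: "nat list \<Rightarrow> nat list \<Rightarrow> bool" where
  "avoids \<pi> \<sigma> \<longleftrightarrow> \<not> contains_pattern \<sigma> \<pi>"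

definition sep_perms :: "nat \<Rightarrow> nat list set" where
  "sep_perms n = {\<pi> \<in> permutations_of_set {1..n}. avoids \<pi> [2,4,1,3] \<and> avoids \<pi> [3,1,4,2]}"

definition des :: "nat list \<Rightarrow> nat" where
  "des \<pi> = card {i. Suc i < length \<pi> \<and> \<pi> ! i > \<pi> ! Suc i}"

definition S :: "nat \<Rightarrow> 'a::comm_semiring_1 \<Rightarrow> 'a" where
  "S n t = (\<Sum>\<pi>\<in>sep_perms n. t ^ des \<pi>)"

datatype sign = Plus | Minus

datatype stree = Leaf | Node stree sign stree

fun nodes :: "stree \<Rightarrow> nat" where
  "nodes Leaf = 0"
| "nodes (Node l s r) = nodes l + 1 + nodes r"

fun n_minus :: "stree \<Rightarrow> nat" where
  "n_minus Leaf = 0"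
| "n_minus (Node l s r) = n_minus l + (if s = Minus then 1 else 0) + n_minus r"

(* labels alternate along every right chain: each node's label differs from that of its right child *)
fun is_disk :: "stree \<Rightarrow> bool" where
  "is_disk Leaf = True"
| "is_disk (Node l s r) = (is_disk l \<and> is_disk r \<and>
      (case r of Leaf \<Rightarrow> True | Node _ s' _ \<Rightarrow> s' \<noteq> s))"

fun root_label :: "stree \<Rightarrow> sign option" where
  "root_label Leaf = None"
| "root_label (Node _ s _) = Some s"

definition DT :: "nat \<Rightarrow> stree set" where
  "DT n = {T. is_disk T \<and> nodes T = n - 1}"

definition DT_plus :: "nat \<Rightarrow> stree set" where
  "DT_plus n = {T \<in> DT n. root_label T = Some Plus}"

definition DT_minus :: "nat \<Rightarrow> stree set" where
  "DT_minus n = {T \<in> DT n. root_label T = Some Minus}"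

definition S1 :: "nat \<Rightarrow> 'a::comm_semiring_1 \<Rightarrow> 'a" where
  "S1 n t = (if n = 1 then 1 else (\<Sum>T\<in>DT_plus n. t ^ n_minus T))"

definition S2 :: "nat \<Rightarrow> 'a::comm_semiring_1 \<Rightarrow> 'a" where
  "S2 n t = (if n = 1 then 1 else (\<Sum>T\<in>DT_minus n. t ^ n_minus T))"

end

theory Submission
  imports Defs
begin

text \<open>
  A separable permutation of size at least two is a direct sum or a skew sum, never both; splitting
  at the largest cut makes the decomposition unique, with a right summand that is itself not a direct
  (resp. skew) sum. Descents add up under direct sums and gain one under skew sums. Dually, deleting
  the root of a di-sk tree leaves an arbitrary left subtree and a right subtree that is empty or has
  the opposite root label. So the descent sums over permutations that are not direct (resp. skew)
  sums and the tree sums over trees whose root is not labelled \<open>Plus\<close> (resp. \<open>Minus\<close>) satisfy the same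
  recursion with the same initial values. By induction the tree sum over all di-sk trees with
  \<open>n - 1\<close> nodes equals \<open>S n t\<close>, and the root decomposition of trees becomes the stated recursion.
\<close>

section \<open>Pattern containment\<close>

lemma contains_pattern_embed:
  assumes occ: "contains_pattern p \<pi>" and f: "strict_mono f"
    and f_at: "\<And>j. j < length \<pi> \<Longrightarrow> f j < length \<pi>' \<and> \<pi>' ! f j = g (\<pi> ! j)"
    and g: "\<And>u v. u \<in> set \<pi> \<Longrightarrow> v \<in> set \<pi> \<Longrightarrow> g u < g v \<longleftrightarrow> u < v"
  shows "contains_pattern p \<pi>'"
proof -
  from occ obtain ix where l: "length ix = length p" and s: "sorted_wrt (<) ix"
    and b: "\<forall>k<length ix. ix ! k < length \<pi>"
    and ord: "\<forall>a<length ix. \<forall>b<length ix. (\<pi> ! (ix ! a) < \<pi> ! (ix ! b)) \<longleftrightarrow> (p ! a < p ! b)"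
    unfolding contains_pattern_def by blast
  show ?thesis unfolding contains_pattern_def
  proof (intro exI[of _ "map f ix"] conjI allI impI)
    show "length (map f ix) = length p" using l by simp
    show "sorted_wrt (<) (map f ix)" using s f
      by (auto simp: sorted_wrt_map strict_mono_def elim: sorted_wrt_mono_rel[rotated])
  next
    fix k assume "k < length (map f ix)"
    thus "map f ix ! k < length \<pi>'" using b f_at by auto
  next
    fix a c assume a: "a < length (map f ix)" and c: "c < length (map f ix)"
    have "\<pi>' ! (map f ix ! a) = g (\<pi> ! (ix ! a))" "\<pi>' ! (map f ix ! c) = g (\<pi> ! (ix ! c))"
      using a c b f_at by auto
    moreover have "g (\<pi> ! (ix ! a)) < g (\<pi> ! (ix ! c)) \<longleftrightarrow> \<pi> ! (ix ! a) < \<pi> ! (ix ! c)"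
      using a c b by (intro g) (auto intro: nth_mem)
    ultimately show "(\<pi>' ! (map f ix ! a) < \<pi>' ! (map f ix ! c)) \<longleftrightarrow> (p ! a < p ! c)"
      using ord a c by simp
  qed
qed

lemma contains_pattern_map_iff:
  assumes "\<And>u v. u \<in> set xs \<Longrightarrow> v \<in> set xs \<Longrightarrow> g u < g v \<longleftrightarrow> u < v"
  shows "contains_pattern p (map g xs) \<longleftrightarrow> contains_pattern p xs"
proof -
  have "(\<forall>a<length ix. \<forall>b<length ix. (map g xs ! (ix ! a) < map g xs ! (ix ! b)) \<longleftrightarrow> (p ! a < p ! b)) \<longleftrightarrow>
        (\<forall>a<length ix. \<forall>b<length ix. (xs ! (ix ! a) < xs ! (ix ! b)) \<longleftrightarrow> (p ! a < p ! b))"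
    if "\<forall>k<length ix. ix ! k < length xs" for ix
    using that assms by (auto intro: nth_mem)
  thus ?thesis unfolding contains_pattern_def length_map by (intro iff_exI) blast
qed

lemma contains_pattern_take: "contains_pattern p (take k \<pi>) \<Longrightarrow> contains_pattern p \<pi>"
  by (erule contains_pattern_embed[where f = id and g = id]) (auto simp: strict_mono_def)

lemma contains_pattern_drop: "contains_pattern p (drop k \<pi>) \<Longrightarrow> contains_pattern p \<pi>"
  by (erule contains_pattern_embed[where f = "\<lambda>j. k + j" and g = id]) (auto simp: strict_mono_def)

lemma contains_pattern_insert:
  "contains_pattern p (xs @ ys) \<Longrightarrow> contains_pattern p (xs @ z # ys)"
  by (erule contains_pattern_embed[where f = "\<lambda>j. if j < length xs then j else Suc j" and g = id])
     (auto simp: strict_mono_def nth_append Suc_diff_le)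

definition block_decomposable :: "bool \<Rightarrow> nat list \<Rightarrow> bool" where
  "block_decomposable below p \<longleftrightarrow>
     (\<exists>a\<in>{1..<length p}. \<forall>x<a. \<forall>y\<in>{a..<length p}. (p ! x < p ! y) = below)"

lemma not_block_decomposable_2413: "\<not> block_decomposable below [2,4,1,3]"
  unfolding block_decomposable_def
  by (cases below) (simp_all add: numeral_eq_Suc atLeastLessThanSuc All_less_Suc)

lemma not_block_decomposable_3142: "\<not> block_decomposable below [3,1,4,2]"
  unfolding block_decomposable_def
  by (cases below) (simp_all add: numeral_eq_Suc atLeastLessThanSuc All_less_Suc)

lemma contains_pattern_suffix:
  assumes "length ix = length p" "sorted_wrt (<) ix"
    and pos: "\<forall>k<length ix. length xs \<le> ix ! k \<and> ix ! k < length (xs @ ys)"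
    and ord: "\<forall>a<length ix. \<forall>b<length ix. ((xs @ ys) ! (ix ! a) < (xs @ ys) ! (ix ! b)) \<longleftrightarrow> (p ! a < p ! b)"
  shows "contains_pattern p ys"
  unfolding contains_pattern_def
proof (intro exI[of _ "map (\<lambda>i. i - length xs) ix"] conjI allI impI)
  show "length (map (\<lambda>i. i - length xs) ix) = length p" using assms(1) by simp
  show "sorted_wrt (<) (map (\<lambda>i. i - length xs) ix)"
    using assms(2) pos by (auto simp: sorted_wrt_iff_nth_less less_diff_conv2)
next
  fix k assume "k < length (map (\<lambda>i. i - length xs) ix)"
  thus "map (\<lambda>i. i - length xs) ix ! k < length ys" using pos by auto
next
  fix x y assume "x < length (map (\<lambda>i. i - length xs) ix)" "y < length (map (\<lambda>i. i - length xs) ix)"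
  hence xy: "x < length ix" "y < length ix" by auto
  show "(ys ! (map (\<lambda>i. i - length xs) ix ! x) < ys ! (map (\<lambda>i. i - length xs) ix ! y)) = (p ! x < p ! y)"
    using ord[rule_format, OF xy] pos[rule_format, OF xy(1)] pos[rule_format, OF xy(2)] xy
    by (simp add: nth_append)
qed

lemma contains_pattern_append_blocks:
  assumes occ: "contains_pattern p (xs @ ys)" and p: "\<not> block_decomposable below p"
    and below: "\<And>u v. u \<in> set xs \<Longrightarrow> v \<in> set ys \<Longrightarrow> (u < v) = below"
  shows "contains_pattern p xs \<or> contains_pattern p ys"
proof -
  from occ obtain ix where l: "length ix = length p" and s: "sorted_wrt (<) ix"
    and b: "\<forall>k<length ix. ix ! k < length (xs @ ys)"
    and ord: "\<forall>a<length ix. \<forall>b<length ix. ((xs@ys) ! (ix ! a) < (xs@ys) ! (ix ! b)) \<longleftrightarrow> (p ! a < p ! b)"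
    unfolding contains_pattern_def by blast
  have sn: "\<And>i j. i < j \<Longrightarrow> j < length ix \<Longrightarrow> ix ! i < ix ! j"
    using s by (simp add: sorted_wrt_iff_nth_less)
  show ?thesis
  proof (cases "\<forall>k<length ix. ix ! k < length xs")
    case True
    hence "contains_pattern p xs" unfolding contains_pattern_def
      using l s ord by (auto simp: nth_append)
    thus ?thesis ..
  next
    case False
    define a where "a = (LEAST k. k < length ix \<and> \<not> ix ! k < length xs)"
    have a: "a < length ix" "\<not> ix ! a < length xs"
      using False LeastI_ex[of "\<lambda>k. k < length ix \<and> \<not> ix ! k < length xs"] unfolding a_def by auto
    have lt: "\<And>x. x < a \<Longrightarrow> ix ! x < length xs"
      using not_less_Least a(1) unfolding a_def by fastforce
    have ge: "\<And>y. a \<le> y \<Longrightarrow> y < length ix \<Longrightarrow> length xs \<le> ix ! y"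
      using a sn by (metis le_less less_trans not_le)
    show ?thesis
    proof (cases "a = 0")
      case True
      hence "\<forall>k<length ix. length xs \<le> ix ! k \<and> ix ! k < length (xs @ ys)" using ge b by simp
      hence "contains_pattern p ys" by (rule contains_pattern_suffix[OF l s _ ord])
      thus ?thesis ..
    next
      case False
      txt \<open>The occurrence straddles position \<open>a\<close>, and block indecomposability of \<open>p\<close> yields a
        straddling pair ordered against \<open>below\<close>.\<close>
      hence "a \<in> {1..<length p}" using a l by auto
      then obtain x y where "x < a" "y \<in> {a..<length p}" "(p ! x < p ! y) \<noteq> below"
        using p unfolding block_decomposable_def by blast
      hence xy: "x < a" "a \<le> y" "y < length p" "(p ! x < p ! y) \<noteq> below" by auto
      have "ix ! x < length xs" "length xs \<le> ix ! y" "ix ! y < length (xs @ ys)"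
        using lt ge xy l b by auto
      hence "(xs @ ys) ! (ix ! x) \<in> set xs" "(xs @ ys) ! (ix ! y) \<in> set ys"
        by (auto simp: nth_append)
      hence "((xs @ ys) ! (ix ! x) < (xs @ ys) ! (ix ! y)) = below" by (rule below)
      thus ?thesis using ord xy l a by auto
    qed
  qed
qed

lemma contains_2413_at:
  "i0 < i1 \<Longrightarrow> i1 < i2 \<Longrightarrow> i2 < i3 \<Longrightarrow> i3 < length \<pi> \<Longrightarrow>
   \<pi> ! i2 < \<pi> ! i0 \<Longrightarrow> \<pi> ! i0 < \<pi> ! i3 \<Longrightarrow> \<pi> ! i3 < \<pi> ! i1 \<Longrightarrow> contains_pattern [2,4,1,3] \<pi>"
  unfolding contains_pattern_def
  by (rule exI[of _ "[i0,i1,i2,i3]"]) (simp add: All_less_Suc numeral_eq_Suc)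

lemma contains_3142_at:
  "i0 < i1 \<Longrightarrow> i1 < i2 \<Longrightarrow> i2 < i3 \<Longrightarrow> i3 < length \<pi> \<Longrightarrow>
   \<pi> ! i1 < \<pi> ! i3 \<Longrightarrow> \<pi> ! i3 < \<pi> ! i0 \<Longrightarrow> \<pi> ! i0 < \<pi> ! i2 \<Longrightarrow> contains_pattern [3,1,4,2] \<pi>"
  unfolding contains_pattern_def
  by (rule exI[of _ "[i0,i1,i2,i3]"]) (simp add: All_less_Suc numeral_eq_Suc)

section \<open>Descents\<close>

lemma des_Nil [simp]: "des [] = 0" and des_singleton [simp]: "des [x] = 0"
  by (simp_all add: des_def)

lemma des_Cons_Cons: "des (x # y # zs) = des (y # zs) + (if y < x then 1 else 0)"
proof -
  let ?A = "{i. Suc i < length (x # y # zs) \<and> (x # y # zs) ! i > (x # y # zs) ! Suc i}"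
  let ?B = "{i. Suc i < length (y # zs) \<and> (y # zs) ! i > (y # zs) ! Suc i}"
  have split: "?A = (if y < x then {0} else {}) \<union> Suc ` ?B"
  proof (intro set_eqI iffI)
    fix i assume "i \<in> ?A" thus "i \<in> (if y < x then {0} else {}) \<union> Suc ` ?B"
      by (cases i) auto
  qed (auto split: if_splits)
  have "finite ?B" by (rule finite_subset[of _ "{..<length (y # zs)}"]) auto
  hence "card ?A = card (if y < x then {0::nat} else {}) + card ?B"
    unfolding split by (subst card_Un_disjoint) (auto simp: card_image)
  thus ?thesis unfolding des_def by simp
qed

lemma des_append:
  "des (xs @ ys) = des xs + des ys + (if xs \<noteq> [] \<and> ys \<noteq> [] \<and> hd ys < last xs then 1 else 0)"
proof (induction xs rule: induct_list012)
  case (2 x) thus ?case by (cases ys) (auto simp: des_Cons_Cons)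
qed (simp_all add: des_Cons_Cons)

lemma des_map:
  assumes "\<And>u v. u \<in> set xs \<Longrightarrow> v \<in> set xs \<Longrightarrow> g u < g v \<longleftrightarrow> u < v"
  shows "des (map g xs) = des xs"
proof -
  have "{i. Suc i < length (map g xs) \<and> map g xs ! i > map g xs ! Suc i}
      = {i. Suc i < length xs \<and> xs ! i > xs ! Suc i}"
    using assms by (auto intro: nth_mem)
  thus ?thesis by (simp add: des_def)
qed

section \<open>Separable permutations, direct and skew sums\<close>

definition separable :: "nat list \<Rightarrow> bool" where
  "separable \<pi> \<longleftrightarrow> avoids \<pi> [2,4,1,3] \<and> avoids \<pi> [3,1,4,2]"

lemma sep_perms_iff: "\<pi> \<in> sep_perms n \<longleftrightarrow> set \<pi> = {1..n} \<and> distinct \<pi> \<and> separable \<pi>"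
  by (auto simp: sep_perms_def separable_def permutations_of_set_def)

lemma length_sep_perms: "\<pi> \<in> sep_perms n \<Longrightarrow> length \<pi> = n"
  by (auto simp: sep_perms_iff dest: distinct_card)

lemma finite_sep_perms: "finite (sep_perms n)"
  by (rule finite_subset[OF _ finite_permutations_of_set[of "{1..n}"]]) (auto simp: sep_perms_def)

lemma separable_map_iff:
  "(\<And>u v. u \<in> set xs \<Longrightarrow> v \<in> set xs \<Longrightarrow> g u < g v \<longleftrightarrow> u < v) \<Longrightarrow> separable (map g xs) \<longleftrightarrow> separable xs"
  unfolding separable_def avoids_def by (simp add: contains_pattern_map_iff)

lemma separable_take: "separable \<pi> \<Longrightarrow> separable (take k \<pi>)"
  unfolding separable_def avoids_def using contains_pattern_take by blast

lemma separable_drop: "separable \<pi> \<Longrightarrow> separable (drop k \<pi>)"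
  unfolding separable_def avoids_def using contains_pattern_drop by blast

lemma separable_remove: "separable (xs @ z # ys) \<Longrightarrow> separable (xs @ ys)"
  unfolding separable_def avoids_def using contains_pattern_insert by blast

lemma separable_append:
  assumes "separable xs" "separable ys" "\<And>u v. u \<in> set xs \<Longrightarrow> v \<in> set ys \<Longrightarrow> (u < v) = below"
  shows "separable (xs @ ys)"
  using assms contains_pattern_append_blocks[OF _ not_block_decomposable_2413, of xs ys below]
    contains_pattern_append_blocks[OF _ not_block_decomposable_3142, of xs ys below]
  unfolding separable_def avoids_def by blast

lemma sep_perms_one: "sep_perms 1 = {[1]}"
proof -
  have "\<not> contains_pattern p [1]" if "length p = 4" for p :: "nat list"
  proof
    assume "contains_pattern p [1]"
    then obtain ix where ix: "length ix = length p" "sorted_wrt (<) ix" "\<forall>k<length ix. ix ! k < length [1::nat]"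
      unfolding contains_pattern_def by blast
    have "ix ! 0 < ix ! 1" using ix(1,2) that by (simp add: sorted_wrt_iff_nth_less)
    moreover have "ix ! 1 < 1" using ix(1,3) that by simp
    ultimately show False by simp
  qed
  hence "separable [1]" unfolding separable_def avoids_def by simp
  moreover have "\<pi> = [1]" if "set \<pi> = {1}" "distinct \<pi>" for \<pi> :: "nat list"
  proof -
    have "length \<pi> = 1" using distinct_card[OF that(2)] that(1) by simp
    with that(1) show ?thesis by (cases \<pi>) auto
  qed
  ultimately show ?thesis by (auto simp: sep_perms_iff)
qed

definition shift :: "nat \<Rightarrow> nat list \<Rightarrow> nat list" where
  "shift k xs = map (\<lambda>x. x + k) xs"

definition direct_sum :: "nat list \<Rightarrow> nat list \<Rightarrow> nat list" where
  "direct_sum \<sigma> \<tau> = \<sigma> @ shift (length \<sigma>) \<tau>"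

definition skew_sum :: "nat list \<Rightarrow> nat list \<Rightarrow> nat list" where
  "skew_sum \<sigma> \<tau> = shift (length \<tau>) \<sigma> @ \<tau>"

lemma set_shift: "set (shift k xs) = (\<lambda>x. x + k) ` set xs"
  by (simp add: shift_def)

lemma length_shift [simp]: "length (shift k xs) = length xs"
  by (simp add: shift_def)

lemma take_shift: "take n (shift k xs) = shift k (take n xs)"
  by (simp add: shift_def take_map)

lemma distinct_shift: "distinct (shift k xs) \<longleftrightarrow> distinct xs"
  by (simp add: shift_def distinct_map)

lemma separable_shift: "separable (shift k xs) \<longleftrightarrow> separable xs"
  unfolding shift_def by (rule separable_map_iff) auto

lemma des_shift: "des (shift k xs) = des xs"
  unfolding shift_def by (rule des_map) auto

lemma unshift_sep_perms:
  assumes "set xs = {c + 1..c + m}" "distinct xs" "separable xs"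
  shows "map (\<lambda>x. x - c) xs \<in> sep_perms m" "shift c (map (\<lambda>x. x - c) xs) = xs"
proof -
  have "(\<lambda>x. x - c) ` {c + 1..c + m} = {1..m}"
    by (force simp: image_iff intro: bexI[of _ "x + c" for x])
  moreover have "inj_on (\<lambda>x. x - c) (set xs)" using assms(1) by (auto simp: inj_on_def)
  moreover have "separable (map (\<lambda>x. x - c) xs)" using assms by (subst separable_map_iff) auto
  ultimately show "map (\<lambda>x. x - c) xs \<in> sep_perms m"
    using assms by (simp add: sep_perms_iff distinct_map)
  show "shift c (map (\<lambda>x. x - c) xs) = xs"
    using assms(1) by (auto simp: shift_def intro!: map_idI)
qed

lemma set_drop_distinct:
  assumes "distinct xs" shows "set (drop k xs) = set xs - set (take k xs)"
proof -
  have "set xs = set (take k xs) \<union> set (drop k xs)" by (metis append_take_drop_id set_append)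
  thus ?thesis using set_take_disj_set_drop_if_distinct[OF assms, of k k] by auto
qed

lemma direct_sum_sep_perms:
  assumes "\<sigma> \<in> sep_perms j" "\<tau> \<in> sep_perms m"
  shows "direct_sum \<sigma> \<tau> \<in> sep_perms (j + m)" "des (direct_sum \<sigma> \<tau>) = des \<sigma> + des \<tau>"
proof -
  have s: "set \<sigma> = {1..j}" "distinct \<sigma>" "separable \<sigma>" "set \<tau> = {1..m}" "distinct \<tau>" "separable \<tau>"
    and l: "length \<sigma> = j" using assms by (auto simp: sep_perms_iff length_sep_perms)
  have st: "set (shift j \<tau>) = {j + 1..j + m}" using s by (simp add: set_shift add.commute)
  have below: "u < v" if "u \<in> set \<sigma>" "v \<in> set (shift j \<tau>)" for u v using that s st by auto
  show "direct_sum \<sigma> \<tau> \<in> sep_perms (j + m)"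
    unfolding sep_perms_iff direct_sum_def l
    using s st below by (auto simp: distinct_shift separable_shift intro!: separable_append[where below = True])
  have "\<not> hd (shift j \<tau>) < last \<sigma>" if "\<sigma> \<noteq> []" "shift j \<tau> \<noteq> []"
    using below[OF last_in_set hd_in_set] that by auto
  thus "des (direct_sum \<sigma> \<tau>) = des \<sigma> + des \<tau>"
    by (auto simp: direct_sum_def des_append des_shift l)
qed

lemma skew_sum_sep_perms:
  assumes "\<sigma> \<in> sep_perms j" "\<tau> \<in> sep_perms m" "0 < j" "0 < m"
  shows "skew_sum \<sigma> \<tau> \<in> sep_perms (j + m)" "des (skew_sum \<sigma> \<tau>) = Suc (des \<sigma> + des \<tau>)"
proof -
  have s: "set \<sigma> = {1..j}" "distinct \<sigma>" "separable \<sigma>" "set \<tau> = {1..m}" "distinct \<tau>" "separable \<tau>"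
    and l: "length \<tau> = m" using assms by (auto simp: sep_perms_iff length_sep_perms)
  have st: "set (shift m \<sigma>) = {m + 1..m + j}" using s by (simp add: set_shift add.commute)
  have above: "v < u" if "u \<in> set (shift m \<sigma>)" "v \<in> set \<tau>" for u v using that s st by auto
  show "skew_sum \<sigma> \<tau> \<in> sep_perms (j + m)"
    unfolding sep_perms_iff skew_sum_def l
    using s st above by (auto simp: distinct_shift separable_shift intro!: separable_append[where below = False])
  have "shift m \<sigma> \<noteq> []" "\<tau> \<noteq> []" using s assms(3,4) st by auto
  moreover from this have "hd \<tau> < last (shift m \<sigma>)" using above[OF last_in_set hd_in_set] by auto
  ultimately show "des (skew_sum \<sigma> \<tau>) = Suc (des \<sigma> + des \<tau>)"
    by (simp add: skew_sum_def des_append des_shift l)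
qed

section \<open>Direct and skew decompositions\<close>

definition direct_cuts :: "nat list \<Rightarrow> nat set" where
  "direct_cuts \<pi> = {k \<in> {1..<length \<pi>}. set (take k \<pi>) = {1..k}}"

definition skew_cuts :: "nat list \<Rightarrow> nat set" where
  "skew_cuts \<pi> = {k \<in> {1..<length \<pi>}. set (take k \<pi>) = {length \<pi> - k + 1..length \<pi>}}"

definition direct_decomposable :: "nat list \<Rightarrow> bool" where
  "direct_decomposable \<pi> \<longleftrightarrow> direct_cuts \<pi> \<noteq> {}"

definition skew_decomposable :: "nat list \<Rightarrow> bool" where
  "skew_decomposable \<pi> \<longleftrightarrow> skew_cuts \<pi> \<noteq> {}"

lemma finite_direct_cuts: "finite (direct_cuts \<pi>)"
  by (simp add: direct_cuts_def)

lemma finite_skew_cuts: "finite (skew_cuts \<pi>)"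
  by (simp add: skew_cuts_def)

lemma direct_cuts_direct_sum:
  assumes "\<sigma> \<in> sep_perms j" "\<tau> \<in> sep_perms m" "j < k"
  shows "k \<in> direct_cuts (direct_sum \<sigma> \<tau>) \<longleftrightarrow> k - j \<in> direct_cuts \<tau>"
proof -
  have l: "length \<sigma> = j" "length \<tau> = m" and s: "set \<sigma> = {1..j}"
    using assms by (auto simp: length_sep_perms sep_perms_iff)
  define A where "A = set (take (k - j) \<tau>)"
  have A: "A \<subseteq> {1..m}" using assms(2) unfolding A_def sep_perms_iff by (metis set_take_subset)
  have "set (take k (direct_sum \<sigma> \<tau>)) = {1..j} \<union> (\<lambda>x. x + j) ` A"
    using l s assms(3) by (simp add: A_def direct_sum_def set_shift take_shift)
  moreover have "{1..j} \<union> (\<lambda>x. x + j) ` A = {1..k} \<longleftrightarrow> A = {1..k - j}"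
  proof
    assume U: "{1..j} \<union> (\<lambda>x. x + j) ` A = {1..k}"
    show "A = {1..k - j}"
    proof (intro set_eqI iffI)
      fix x assume "x \<in> A"
      hence "x + j \<in> {1..k}" "1 \<le> x" using U A by auto
      thus "x \<in> {1..k - j}" by auto
    next
      fix x assume "x \<in> {1..k - j}"
      hence "x + j \<in> {1..k} - {1..j}" using assms(3) by auto
      hence "x + j \<in> (\<lambda>x. x + j) ` A" using U by blast
      thus "x \<in> A" by auto
    qed
  next
    assume "A = {1..k - j}"
    thus "{1..j} \<union> (\<lambda>x. x + j) ` A = {1..k}"
      using assms(3) by (auto simp: add.commute)
  qed
  ultimately show ?thesis using l assms(3) by (auto simp: direct_cuts_def direct_sum_def A_def)
qed

lemma skew_cuts_skew_sum:
  assumes "\<sigma> \<in> sep_perms j" "\<tau> \<in> sep_perms m" "j < k"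
  shows "k \<in> skew_cuts (skew_sum \<sigma> \<tau>) \<longleftrightarrow> k - j \<in> skew_cuts \<tau>"
proof (cases "k < j + m")
  case True
  have l: "length \<sigma> = j" "length \<tau> = m" and s: "set \<sigma> = {1..j}"
    using assms by (auto simp: length_sep_perms sep_perms_iff)
  define A where "A = set (take (k - j) \<tau>)"
  have A: "A \<subseteq> {1..m}" using assms(2) unfolding A_def sep_perms_iff by (metis set_take_subset)
  have "set (take k (skew_sum \<sigma> \<tau>)) = {m + 1..m + j} \<union> A"
    using l s assms(3) by (simp add: A_def skew_sum_def set_shift take_shift add.commute)
  moreover have "{m + 1..m + j} \<union> A = {j + m - k + 1..j + m} \<longleftrightarrow> A = {m - (k - j) + 1..m}"
  proof
    assume U: "{m + 1..m + j} \<union> A = {j + m - k + 1..j + m}"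
    show "A = {m - (k - j) + 1..m}"
    proof (intro set_eqI iffI)
      fix x assume x: "x \<in> A"
      hence "x \<in> {j + m - k + 1..j + m}" using U by blast
      thus "x \<in> {m - (k - j) + 1..m}" using x A assms(3) True by auto
    next
      fix x assume "x \<in> {m - (k - j) + 1..m}"
      hence "x \<in> {j + m - k + 1..j + m} - {m + 1..m + j}" using assms(3) True by auto
      thus "x \<in> A" using U by auto
    qed
  qed (use assms(3) True in auto)
  ultimately show ?thesis using l assms(3) True
    by (auto simp: skew_cuts_def skew_sum_def A_def add.commute)
next
  case False
  thus ?thesis using assms by (auto simp: skew_cuts_def skew_sum_def length_sep_perms)
qed

lemma direct_sum_take_drop:
  assumes \<pi>: "\<pi> \<in> sep_perms n" and k: "k \<in> direct_cuts \<pi>"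
  shows "take k \<pi> \<in> sep_perms k" "map (\<lambda>x. x - k) (drop k \<pi>) \<in> sep_perms (n - k)"
    "direct_sum (take k \<pi>) (map (\<lambda>x. x - k) (drop k \<pi>)) = \<pi>"
proof -
  have s: "set \<pi> = {1..n}" "distinct \<pi>" "separable \<pi>" and l: "length \<pi> = n"
    using \<pi> by (auto simp: sep_perms_iff length_sep_perms)
  have kn: "k < n" and tk: "set (take k \<pi>) = {1..k}" using k l by (auto simp: direct_cuts_def)
  have "set (drop k \<pi>) = {k + 1..k + (n - k)}" using set_drop_distinct[OF s(2)] s(1) tk kn by auto
  note unshift = unshift_sep_perms[OF this distinct_drop[OF s(2)] separable_drop[OF s(3)]]
  show "take k \<pi> \<in> sep_perms k" using tk s by (simp add: sep_perms_iff separable_take)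
  show "map (\<lambda>x. x - k) (drop k \<pi>) \<in> sep_perms (n - k)" by (rule unshift(1))
  show "direct_sum (take k \<pi>) (map (\<lambda>x. x - k) (drop k \<pi>)) = \<pi>"
    using unshift(2) kn l by (simp add: direct_sum_def min_def)
qed

lemma skew_sum_take_drop:
  assumes \<pi>: "\<pi> \<in> sep_perms n" and k: "k \<in> skew_cuts \<pi>"
  shows "map (\<lambda>x. x - (n - k)) (take k \<pi>) \<in> sep_perms k" "drop k \<pi> \<in> sep_perms (n - k)"
    "skew_sum (map (\<lambda>x. x - (n - k)) (take k \<pi>)) (drop k \<pi>) = \<pi>"
proof -
  have s: "set \<pi> = {1..n}" "distinct \<pi>" "separable \<pi>" and l: "length \<pi> = n"
    using \<pi> by (auto simp: sep_perms_iff length_sep_perms)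
  have kn: "k < n" and tk: "set (take k \<pi>) = {n - k + 1..n - k + k}" using k l by (auto simp: skew_cuts_def)
  note unshift = unshift_sep_perms[OF tk distinct_take[OF s(2)] separable_take[OF s(3)]]
  show "map (\<lambda>x. x - (n - k)) (take k \<pi>) \<in> sep_perms k" by (rule unshift(1))
  have "set (drop k \<pi>) = {1..n - k}" using set_drop_distinct[OF s(2)] s(1) tk kn by auto
  thus "drop k \<pi> \<in> sep_perms (n - k)" using s by (simp add: sep_perms_iff separable_drop)
  show "skew_sum (map (\<lambda>x. x - (n - k)) (take k \<pi>)) (drop k \<pi>) = \<pi>"
    using unshift(2) l by (simp add: skew_sum_def)
qed

lemma direct_sum_Max_direct_cuts:
  assumes "\<sigma> \<in> sep_perms j" "\<tau> \<in> sep_perms m" "0 < j" "0 < m" "\<not> direct_decomposable \<tau>"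
  shows "j \<in> direct_cuts (direct_sum \<sigma> \<tau>)" "Max (direct_cuts (direct_sum \<sigma> \<tau>)) = j"
proof -
  show j: "j \<in> direct_cuts (direct_sum \<sigma> \<tau>)"
    using assms by (auto simp: direct_cuts_def direct_sum_def sep_perms_iff length_sep_perms)
  have "\<not> j < k" if "k \<in> direct_cuts (direct_sum \<sigma> \<tau>)" for k
    using that direct_cuts_direct_sum[OF assms(1,2)] assms(5) by (auto simp: direct_decomposable_def)
  thus "Max (direct_cuts (direct_sum \<sigma> \<tau>)) = j" using j finite_direct_cuts
    by (intro Max_eqI) (auto simp: not_less)
qed

lemma skew_sum_Max_skew_cuts:
  assumes "\<sigma> \<in> sep_perms j" "\<tau> \<in> sep_perms m" "0 < j" "0 < m" "\<not> skew_decomposable \<tau>"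
  shows "j \<in> skew_cuts (skew_sum \<sigma> \<tau>)" "Max (skew_cuts (skew_sum \<sigma> \<tau>)) = j"
proof -
  have "set (take j (skew_sum \<sigma> \<tau>)) = {m + 1..m + j}"
    using assms by (auto simp: skew_sum_def set_shift length_sep_perms sep_perms_iff add.commute)
  thus j: "j \<in> skew_cuts (skew_sum \<sigma> \<tau>)"
    using assms by (auto simp: skew_cuts_def skew_sum_def length_sep_perms)
  have "\<not> j < k" if "k \<in> skew_cuts (skew_sum \<sigma> \<tau>)" for k
    using that skew_cuts_skew_sum[OF assms(1,2)] assms(5) by (auto simp: skew_decomposable_def)
  thus "Max (skew_cuts (skew_sum \<sigma> \<tau>)) = j" using j finite_skew_cuts
    by (intro Max_eqI) (auto simp: not_less)
qed

text \<open>A cut of the right part would give a larger cut of the whole permutation.\<close>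

lemma not_direct_decomposable_after_Max_cut:
  assumes \<pi>: "\<pi> \<in> sep_perms n" and "direct_decomposable \<pi>"
  defines "k \<equiv> Max (direct_cuts \<pi>)"
  shows "\<not> direct_decomposable (map (\<lambda>x. x - k) (drop k \<pi>))"
proof
  have k: "k \<in> direct_cuts \<pi>" using assms finite_direct_cuts Max_in by (auto simp: direct_decomposable_def)
  note split = direct_sum_take_drop[OF \<pi> k]
  assume "direct_decomposable (map (\<lambda>x. x - k) (drop k \<pi>))"
  then obtain q where q: "q \<in> direct_cuts (map (\<lambda>x. x - k) (drop k \<pi>))"
    by (auto simp: direct_decomposable_def)
  hence "0 < q" by (simp add: direct_cuts_def)
  moreover have "k + q \<in> direct_cuts \<pi>"
    using direct_cuts_direct_sum[OF split(1,2), of "k + q"] q \<open>0 < q\<close> split(3) by simp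
  hence "k + q \<le> k" unfolding k_def using finite_direct_cuts by (rule Max_ge[rotated])
  ultimately show False by simp
qed

lemma not_skew_decomposable_after_Max_cut:
  assumes \<pi>: "\<pi> \<in> sep_perms n" and "skew_decomposable \<pi>"
  defines "k \<equiv> Max (skew_cuts \<pi>)"
  shows "\<not> skew_decomposable (drop k \<pi>)"
proof
  have k: "k \<in> skew_cuts \<pi>" using assms finite_skew_cuts Max_in by (auto simp: skew_decomposable_def)
  note split = skew_sum_take_drop[OF \<pi> k]
  assume "skew_decomposable (drop k \<pi>)"
  then obtain q where q: "q \<in> skew_cuts (drop k \<pi>)" by (auto simp: skew_decomposable_def)
  hence "0 < q" by (simp add: skew_cuts_def)
  moreover have "k + q \<in> skew_cuts \<pi>"
    using skew_cuts_skew_sum[OF split(1,2), of "k + q"] q \<open>0 < q\<close> split(3) by simp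
  hence "k + q \<le> k" unfolding k_def using finite_skew_cuts by (rule Max_ge[rotated])
  ultimately show False by simp
qed

lemma not_direct_and_skew_decomposable:
  assumes "\<pi> \<in> sep_perms n" "direct_decomposable \<pi>" "skew_decomposable \<pi>"
  shows False
proof -
  have l: "length \<pi> = n" using assms(1) by (rule length_sep_perms)
  obtain k1 where k1: "k1 \<in> {1..<n}" "set (take k1 \<pi>) = {1..k1}"
    using assms(2) l unfolding direct_decomposable_def direct_cuts_def by blast
  obtain k2 where k2: "k2 \<in> {1..<n}" "set (take k2 \<pi>) = {n - k2 + 1..n}"
    using assms(3) l unfolding skew_decomposable_def skew_cuts_def by blast
  have "{1..k1} \<subseteq> {n - k2 + 1..n} \<or> {n - k2 + 1..n} \<subseteq> {1..k1}"
    using k1(2) k2(2) set_take_subset_set_take nat_le_linear by metis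
  thus False using k1 k2 by auto
qed

lemma initial_segment_if_below:
  assumes "finite X" "X \<union> Y = {1..m}" "\<And>x y. x \<in> X \<Longrightarrow> y \<in> Y \<Longrightarrow> x < y"
  shows "X = {1..card X}"
proof -
  have "x \<in> {1..card X}" if x: "x \<in> X" for x
  proof -
    have "x \<le> m" using x assms(2) by auto
    have "z \<in> X" if "z \<in> {1..x}" for z
    proof -
      have "z \<in> X \<union> Y" using \<open>x \<le> m\<close> that assms(2) by auto
      moreover have "z \<notin> Y" using assms(3)[OF x] that by force
      ultimately show ?thesis by blast
    qed
    hence "{1..x} \<subseteq> X" by blast
    hence "card {1..x} \<le> card X" using assms(1) by (rule card_mono[rotated])
    thus ?thesis using x assms(2) by auto
  qed
  thus ?thesis by (intro card_subset_eq) auto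
qed

lemma nth_mem_drop: "n \<le> q \<Longrightarrow> q < length xs \<Longrightarrow> xs ! q \<in> set (drop n xs)"
  using nth_mem[of "q - n" "drop n xs"] by simp

text \<open>The witness is \<open>u\<close>, the new maximum, \<open>v\<close> and the first entry after the cut.\<close>

lemma insert_max_contains_2413:
  assumes dist: "distinct (xs @ ys)" and set: "set (xs @ ys) = {1..m}"
    and k: "length xs < k" "k < m" "set (take k (xs @ ys)) = {1..k}"
    and uv: "u \<in> set xs" "v \<in> set ys" "v < u"
  shows "contains_pattern [2,4,1,3] (xs @ Suc m # ys)"
proof -
  define i where "i = length xs"
  have lxy: "i + length ys = m" using dist set distinct_card[OF dist] by (simp add: i_def)
  obtain p where p: "p < i" "xs ! p = u" using uv(1) by (auto simp: i_def in_set_conv_nth)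
  obtain q where q: "q < length ys" "ys ! q = v" using uv(2) by (auto simp: in_set_conv_nth)
  have take: "take k (xs @ ys) = xs @ take (k - i) ys" using k(1) by (simp add: i_def)
  have big: "k < w" if "w \<in> set (drop (k - i) ys)" for w
  proof -
    have "drop k (xs @ ys) = drop (k - i) ys" using k(1) by (simp add: i_def)
    thus ?thesis using that set_drop_distinct[OF dist, of k] set k(3) by auto
  qed
  have "u \<le> k" using k(3) uv(1) unfolding take by auto
  have qk: "q < k - i"
  proof (rule ccontr)
    assume "\<not> q < k - i"
    hence "ys ! q \<in> set (drop (k - i) ys)" using q(1) by (simp add: nth_mem_drop)
    hence "k < v" using big q(2) by blast
    thus False using \<open>u \<le> k\<close> uv(3) by simp
  qed
  have ki: "k - i < length ys" using k lxy by (simp add: i_def)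
  have "k < ys ! (k - i)" using big[OF nth_mem_drop[OF order.refl ki]] by simp
  moreover have "ys ! (k - i) \<le> m" using set nth_mem[OF ki] by auto
  moreover have "(xs @ Suc m # ys) ! p = u" "(xs @ Suc m # ys) ! i = Suc m"
    "(xs @ Suc m # ys) ! (i + 1 + q) = v" "(xs @ Suc m # ys) ! (i + 1 + (k - i)) = ys ! (k - i)"
    using p q by (auto simp: nth_append i_def)
  ultimately show ?thesis using p qk ki lxy uv(3) \<open>u \<le> k\<close>
    by (intro contains_2413_at[of p i "i + 1 + q" "i + 1 + (k - i)"]) (auto simp: i_def)
qed

text \<open>The witness is the first entry, \<open>u\<close>, the new maximum and \<open>v\<close>.\<close>

lemma insert_max_contains_3142:
  assumes dist: "distinct (xs @ ys)" and set: "set (xs @ ys) = {1..m}"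
    and k: "0 < k" "k < length xs" "set (take k (xs @ ys)) = {m - k + 1..m}"
    and uv: "u \<in> set xs" "v \<in> set ys" "u < v"
  shows "contains_pattern [3,1,4,2] (xs @ Suc m # ys)"
proof -
  define i where "i = length xs"
  have lxy: "i + length ys = m" using dist set distinct_card[OF dist] by (simp add: i_def)
  obtain p where p: "p < i" "xs ! p = u" using uv(1) by (auto simp: i_def in_set_conv_nth)
  obtain q where q: "q < length ys" "ys ! q = v" using uv(2) by (auto simp: in_set_conv_nth)
  have take: "take k (xs @ ys) = take k xs" using k(2) by simp
  have "v \<in> set (drop k (xs @ ys))" using k(2) uv(2) by simp
  hence "v \<notin> {m - k + 1..m}" using set_drop_distinct[OF dist, of k] k(3) by auto
  hence v: "v \<le> m - k" using uv(2) set by auto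
  have pk: "k \<le> p"
  proof (rule ccontr)
    assume "\<not> k \<le> p"
    hence "u \<in> set (take k xs)" using p nth_mem[of p "take k xs"] by (simp add: i_def)
    hence "u \<in> {m - k + 1..m}" using k(3) unfolding take by blast
    thus False using v uv(3) by auto
  qed
  have "xs ! 0 \<in> set (take k xs)" using k(1,2) nth_mem[of 0 "take k xs"] by simp
  hence "xs ! 0 \<in> {m - k + 1..m}" using k(3) unfolding take by blast
  hence a: "m - k + 1 \<le> xs ! 0" "xs ! 0 \<le> m" by auto
  moreover have "(xs @ Suc m # ys) ! 0 = xs ! 0" "(xs @ Suc m # ys) ! p = u"
    "(xs @ Suc m # ys) ! i = Suc m" "(xs @ Suc m # ys) ! (i + 1 + q) = v"
    using p q k by (auto simp: nth_append i_def)
  ultimately show ?thesis using p pk k(1) q lxy uv(3) v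
    by (intro contains_3142_at[of 0 p i "i + 1 + q"]) (auto simp: i_def)
qed

lemma disjoint_lists_cases:
  fixes xs ys :: "'a::linorder list"
  assumes "set xs \<inter> set ys = {}"
  obtains "\<forall>u\<in>set xs. \<forall>v\<in>set ys. u < v" | u v where "u \<in> set xs" "v \<in> set ys" "v < u"
proof (cases "\<forall>u\<in>set xs. \<forall>v\<in>set ys. u < v")
  case False
  then obtain u v where "u \<in> set xs" "v \<in> set ys" "\<not> u < v" by blast
  moreover from this have "u \<noteq> v" using assms by auto
  ultimately show ?thesis using that(2) by simp
qed (use that in blast)

lemma direct_decomposable_insert_max:
  assumes dist: "distinct (xs @ ys)" and set: "set (xs @ ys) = {1..m}" and "xs \<noteq> []"
    and avoid: "avoids (xs @ Suc m # ys) [2,4,1,3]" and dec: "direct_decomposable (xs @ ys)"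
  shows "direct_decomposable (xs @ Suc m # ys)"
proof -
  have lxy: "length xs + length ys = m" using distinct_card[OF dist] set by simp
  obtain k where "k \<in> {1..<m}" and "set (take k (xs @ ys)) = {1..k}"
    using dec lxy unfolding direct_decomposable_def direct_cuts_def length_append by blast
  hence k: "0 < k" "k < m" "set (take k (xs @ ys)) = {1..k}" by auto
  have "\<exists>c \<in> {1..<Suc m}. set (take c (xs @ Suc m # ys)) = {1..c}"
  proof (cases "k \<le> length xs")
    case True
    thus ?thesis using k by (intro bexI[of _ k]) auto
  next
    case False
    from dist have "set xs \<inter> set ys = {}" by simp
    thus ?thesis
    proof (cases rule: disjoint_lists_cases)
      case 1
      hence "set xs = {1..card (set xs)}" using set by (intro initial_segment_if_below[of _ "set ys" m]) auto
      thus ?thesis using distinct_card[of xs] dist \<open>xs \<noteq> []\<close> lxy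
        by (intro bexI[of _ "length xs"]) auto
    next
      case (2 u v)
      thus ?thesis using insert_max_contains_2413[OF dist set _ k(2,3)] False avoid
        by (simp add: avoids_def)
    qed
  qed
  then obtain c where "c \<in> {1..<Suc m}" "set (take c (xs @ Suc m # ys)) = {1..c}" ..
  hence "c \<in> direct_cuts (xs @ Suc m # ys)" using lxy by (simp add: direct_cuts_def)
  thus ?thesis by (auto simp: direct_decomposable_def)
qed

lemma skew_decomposable_insert_max:
  assumes dist: "distinct (xs @ ys)" and set: "set (xs @ ys) = {1..m}" and "ys \<noteq> []"
    and avoid: "avoids (xs @ Suc m # ys) [3,1,4,2]" and dec: "skew_decomposable (xs @ ys)"
  shows "skew_decomposable (xs @ Suc m # ys)"
proof -
  have lxy: "length xs + length ys = m" using distinct_card[OF dist] set by simp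
  obtain k where "k \<in> {1..<m}" and "set (take k (xs @ ys)) = {m - k + 1..m}"
    using dec lxy unfolding skew_decomposable_def skew_cuts_def length_append by blast
  hence k: "0 < k" "k < m" "set (take k (xs @ ys)) = {m - k + 1..m}" by auto
  have "\<exists>c \<in> {1..<Suc m}. set (take c (xs @ Suc m # ys)) = {Suc m - c + 1..Suc m}"
  proof (cases "length xs \<le> k")
    case True
    hence "set (take (k + 1) (xs @ Suc m # ys)) = {m - k + 1..m} \<union> {Suc m}"
      using k(3) by (simp add: Suc_diff_le)
    also have "\<dots> = {Suc m - (k + 1) + 1..Suc m}" using k(2) by auto
    finally show ?thesis using k by (intro bexI[of _ "k + 1"]) auto
  next
    case False
    from dist have "set ys \<inter> set xs = {}" by auto
    thus ?thesis
    proof (cases rule: disjoint_lists_cases)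
      case 1
      hence "set ys = {1..card (set ys)}" using set by (intro initial_segment_if_below[of _ "set xs" m]) auto
      hence "set ys = {1..length ys}" using dist by (simp add: distinct_card)
      moreover have "set xs = {1..m} - set ys" using set dist by auto
      ultimately have "set xs = {length ys + 1..m}" by auto
      hence "set (take (length xs + 1) (xs @ Suc m # ys)) = {Suc m - (length xs + 1) + 1..Suc m}"
        using lxy by auto
      thus ?thesis using \<open>ys \<noteq> []\<close> lxy by (intro bexI[of _ "length xs + 1"]) auto
    next
      case (2 v u)
      thus ?thesis using insert_max_contains_3142[OF dist set k(1) _ k(3)] False avoid
        by (simp add: avoids_def)
    qed
  qed
  then obtain c where "c \<in> {1..<Suc m}" "set (take c (xs @ Suc m # ys)) = {Suc m - c + 1..Suc m}" ..
  hence "c \<in> skew_cuts (xs @ Suc m # ys)" using lxy by (simp add: skew_cuts_def)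
  thus ?thesis by (auto simp: skew_decomposable_def)
qed

text \<open>Deleting the maximum leaves a smaller separable permutation, and a cut of it survives the
  reinsertion of the maximum, since otherwise 2413 or 3142 would occur.\<close>

lemma sep_perms_decomposable:
  assumes "\<pi> \<in> sep_perms n" "2 \<le> n"
  shows "direct_decomposable \<pi> \<or> skew_decomposable \<pi>"
  using assms
proof (induction n arbitrary: \<pi>)
  case (Suc m)
  have s: "set \<pi> = {1..Suc m}" "distinct \<pi>" "separable \<pi>" and l: "length \<pi> = Suc m"
    using Suc.prems(1) by (auto simp: sep_perms_iff length_sep_perms)
  have "Suc m \<in> set \<pi>" using s(1) by simp
  then obtain xs ys where \<pi>: "\<pi> = xs @ Suc m # ys" by (meson split_list)
  have dist: "distinct (xs @ ys)" using s(2) \<pi> by simp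
  have "set (xs @ ys) = set \<pi> - {Suc m}" using s(2) \<pi> by auto
  hence set: "set (xs @ ys) = {1..m}" using s(1) by (simp add: atLeastAtMostSuc_conv)
  have sep: "separable (xs @ ys)" using s(3) \<pi> by (blast intro: separable_remove)
  have avoid: "avoids (xs @ Suc m # ys) [2,4,1,3]" "avoids (xs @ Suc m # ys) [3,1,4,2]"
    using s(3) \<pi> by (simp_all add: separable_def)
  consider "xs = []" | "ys = []" | "xs \<noteq> [] \<and> ys \<noteq> []" by blast
  then show ?case
  proof cases
    case 1
    hence "take 1 \<pi> = [Suc m]" "length \<pi> = Suc m" using \<pi> l by simp_all
    hence "1 \<in> skew_cuts \<pi>" using Suc.prems(2) by (simp add: skew_cuts_def)
    thus ?thesis by (auto simp: skew_decomposable_def)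
  next
    case 2
    hence "take m \<pi> = xs" "set xs = {1..m}" "length \<pi> = Suc m" using \<pi> set l by simp_all
    hence "m \<in> direct_cuts \<pi>" using Suc.prems(2) by (simp add: direct_cuts_def)
    thus ?thesis by (auto simp: direct_decomposable_def)
  next
    case 3
    hence ne: "xs \<noteq> []" "ys \<noteq> []" by auto
    have "length xs + length ys = m" using distinct_card[OF dist] set by simp
    moreover have "0 < length xs" "0 < length ys" using ne by simp_all
    ultimately have "2 \<le> m" by linarith
    have "xs @ ys \<in> sep_perms m" using dist set sep by (simp add: sep_perms_iff)
    hence "direct_decomposable (xs @ ys) \<or> skew_decomposable (xs @ ys)"
      using \<open>2 \<le> m\<close> by (rule Suc.IH)
    thus ?thesis
      using direct_decomposable_insert_max[OF dist set ne(1) avoid(1)]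
        skew_decomposable_insert_max[OF dist set ne(2) avoid(2)]
      unfolding \<pi> by blast
  qed
qed simp

section \<open>Descent sums over decompositions\<close>

definition sep_direct_indec :: "nat \<Rightarrow> nat list set" where
  "sep_direct_indec n = {\<pi> \<in> sep_perms n. \<not> direct_decomposable \<pi>}"

definition sep_skew_indec :: "nat \<Rightarrow> nat list set" where
  "sep_skew_indec n = {\<pi> \<in> sep_perms n. \<not> skew_decomposable \<pi>}"

lemma sep_direct_indec_eq_skew_decomposable: "2 \<le> n \<Longrightarrow> sep_direct_indec n = {\<pi> \<in> sep_perms n. skew_decomposable \<pi>}"
  using sep_perms_decomposable not_direct_and_skew_decomposable
  unfolding sep_direct_indec_def by blast

lemma sep_skew_indec_eq_direct_decomposable: "2 \<le> n \<Longrightarrow> sep_skew_indec n = {\<pi> \<in> sep_perms n. direct_decomposable \<pi>}"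
  using sep_perms_decomposable not_direct_and_skew_decomposable
  unfolding sep_skew_indec_def by blast

lemma sep_direct_indec_one: "sep_direct_indec 1 = {[1]}"
  by (auto simp: sep_direct_indec_def sep_perms_one[unfolded One_nat_def] direct_decomposable_def direct_cuts_def)

lemma sep_skew_indec_one: "sep_skew_indec 1 = {[1]}"
  by (auto simp: sep_skew_indec_def sep_perms_one[unfolded One_nat_def] skew_decomposable_def skew_cuts_def)

definition direct_split :: "nat list \<Rightarrow> nat \<times> nat list \<times> nat list" where
  "direct_split \<pi> = (let k = Max (direct_cuts \<pi>) in (k, take k \<pi>, map (\<lambda>x. x - k) (drop k \<pi>)))"

lemma direct_split_direct_sum:
  assumes "\<sigma> \<in> sep_perms j" "\<tau> \<in> sep_direct_indec m" "0 < j" "0 < m"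
  shows "direct_split (direct_sum \<sigma> \<tau>) = (j, \<sigma>, \<tau>)"
proof -
  have "Max (direct_cuts (direct_sum \<sigma> \<tau>)) = j"
    using assms direct_sum_Max_direct_cuts(2)[of \<sigma> j \<tau> m] by (simp add: sep_direct_indec_def)
  thus ?thesis using length_sep_perms[OF assms(1)]
    by (simp add: direct_split_def direct_sum_def shift_def comp_def)
qed

lemma direct_split_sep_perms:
  assumes \<pi>: "\<pi> \<in> sep_perms n" and dec: "direct_decomposable \<pi>"
  shows "direct_split \<pi> \<in> (SIGMA j:{1..n-1}. sep_perms j \<times> sep_direct_indec (n - j))"
    "(\<lambda>(j, \<sigma>, \<tau>). direct_sum \<sigma> \<tau>) (direct_split \<pi>) = \<pi>"
proof -
  define k where "k = Max (direct_cuts \<pi>)"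
  have k: "k \<in> direct_cuts \<pi>" using dec finite_direct_cuts Max_in
    by (auto simp: k_def direct_decomposable_def)
  hence "k \<in> {1..n-1}" using length_sep_perms[OF \<pi>] by (auto simp: direct_cuts_def)
  thus "direct_split \<pi> \<in> (SIGMA j:{1..n-1}. sep_perms j \<times> sep_direct_indec (n - j))"
    using direct_sum_take_drop(1,2)[OF \<pi> k] not_direct_decomposable_after_Max_cut[OF \<pi> dec]
    by (simp add: direct_split_def k_def[symmetric] sep_direct_indec_def)
  show "(\<lambda>(j, \<sigma>, \<tau>). direct_sum \<sigma> \<tau>) (direct_split \<pi>) = \<pi>"
    using direct_sum_take_drop(3)[OF \<pi> k] by (simp add: direct_split_def k_def[symmetric])
qed

lemma bij_betw_direct_sum:
  "bij_betw (\<lambda>(j, \<sigma>, \<tau>). direct_sum \<sigma> \<tau>)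
     (SIGMA j:{1..n-1}. sep_perms j \<times> sep_direct_indec (n - j))
     {\<pi> \<in> sep_perms n. direct_decomposable \<pi>}"
proof (rule bij_betw_byWitness[where f' = direct_split])
  show "(\<lambda>(j, \<sigma>, \<tau>). direct_sum \<sigma> \<tau>) ` (SIGMA j:{1..n-1}. sep_perms j \<times> sep_direct_indec (n - j))
      \<subseteq> {\<pi> \<in> sep_perms n. direct_decomposable \<pi>}"
  proof clarify
    fix j \<sigma> \<tau> assume j: "j \<in> {1..n-1}" and \<sigma>: "\<sigma> \<in> sep_perms j"
      and \<tau>: "\<tau> \<in> sep_direct_indec (n - j)"
    hence "direct_sum \<sigma> \<tau> \<in> sep_perms (j + (n - j))" "j \<in> direct_cuts (direct_sum \<sigma> \<tau>)"
      using direct_sum_sep_perms(1) direct_sum_Max_direct_cuts(1) by (auto simp: sep_direct_indec_def)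
    thus "direct_sum \<sigma> \<tau> \<in> sep_perms n \<and> direct_decomposable (direct_sum \<sigma> \<tau>)"
      using j by (auto simp: direct_decomposable_def)
  qed
  show "direct_split ` {\<pi> \<in> sep_perms n. direct_decomposable \<pi>}
      \<subseteq> (SIGMA j:{1..n-1}. sep_perms j \<times> sep_direct_indec (n - j))"
    using direct_split_sep_perms(1) by blast
qed (auto intro!: direct_split_direct_sum direct_split_sep_perms(2))

definition skew_split :: "nat list \<Rightarrow> nat \<times> nat list \<times> nat list" where
  "skew_split \<pi> = (let k = Max (skew_cuts \<pi>) in (k, map (\<lambda>x. x - (length \<pi> - k)) (take k \<pi>), drop k \<pi>))"

lemma skew_split_skew_sum:
  assumes "\<sigma> \<in> sep_perms j" "\<tau> \<in> sep_skew_indec m" "0 < j" "0 < m"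
  shows "skew_split (skew_sum \<sigma> \<tau>) = (j, \<sigma>, \<tau>)"
proof -
  have "Max (skew_cuts (skew_sum \<sigma> \<tau>)) = j"
    using assms skew_sum_Max_skew_cuts(2)[of \<sigma> j \<tau> m] by (simp add: sep_skew_indec_def)
  moreover have "length \<sigma> = j" "length \<tau> = m"
    using assms(1,2) by (auto simp: length_sep_perms sep_skew_indec_def)
  ultimately show ?thesis by (simp add: skew_split_def skew_sum_def shift_def comp_def)
qed

lemma skew_split_sep_perms:
  assumes \<pi>: "\<pi> \<in> sep_perms n" and dec: "skew_decomposable \<pi>"
  shows "skew_split \<pi> \<in> (SIGMA j:{1..n-1}. sep_perms j \<times> sep_skew_indec (n - j))"
    "(\<lambda>(j, \<sigma>, \<tau>). skew_sum \<sigma> \<tau>) (skew_split \<pi>) = \<pi>"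
proof -
  define k where "k = Max (skew_cuts \<pi>)"
  have k: "k \<in> skew_cuts \<pi>" using dec finite_skew_cuts Max_in
    by (auto simp: k_def skew_decomposable_def)
  have l: "length \<pi> = n" using \<pi> by (rule length_sep_perms)
  have "k \<in> {1..n-1}" using k l by (auto simp: skew_cuts_def)
  thus "skew_split \<pi> \<in> (SIGMA j:{1..n-1}. sep_perms j \<times> sep_skew_indec (n - j))"
    using skew_sum_take_drop(1,2)[OF \<pi> k] not_skew_decomposable_after_Max_cut[OF \<pi> dec]
    by (simp add: skew_split_def k_def[symmetric] sep_skew_indec_def l)
  show "(\<lambda>(j, \<sigma>, \<tau>). skew_sum \<sigma> \<tau>) (skew_split \<pi>) = \<pi>"
    using skew_sum_take_drop(3)[OF \<pi> k] by (simp add: skew_split_def k_def[symmetric] l)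
qed

lemma bij_betw_skew_sum:
  "bij_betw (\<lambda>(j, \<sigma>, \<tau>). skew_sum \<sigma> \<tau>)
     (SIGMA j:{1..n-1}. sep_perms j \<times> sep_skew_indec (n - j))
     {\<pi> \<in> sep_perms n. skew_decomposable \<pi>}"
proof (rule bij_betw_byWitness[where f' = skew_split])
  show "(\<lambda>(j, \<sigma>, \<tau>). skew_sum \<sigma> \<tau>) ` (SIGMA j:{1..n-1}. sep_perms j \<times> sep_skew_indec (n - j))
      \<subseteq> {\<pi> \<in> sep_perms n. skew_decomposable \<pi>}"
  proof clarify
    fix j \<sigma> \<tau> assume j: "j \<in> {1..n-1}" and \<sigma>: "\<sigma> \<in> sep_perms j"
      and \<tau>: "\<tau> \<in> sep_skew_indec (n - j)"
    hence "skew_sum \<sigma> \<tau> \<in> sep_perms (j + (n - j))" "j \<in> skew_cuts (skew_sum \<sigma> \<tau>)"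
      using skew_sum_sep_perms(1)[of \<sigma> j \<tau> "n - j"] skew_sum_Max_skew_cuts(1)[of \<sigma> j \<tau> "n - j"]
      by (auto simp: sep_skew_indec_def)
    thus "skew_sum \<sigma> \<tau> \<in> sep_perms n \<and> skew_decomposable (skew_sum \<sigma> \<tau>)"
      using j by (auto simp: skew_decomposable_def)
  qed
  show "skew_split ` {\<pi> \<in> sep_perms n. skew_decomposable \<pi>}
      \<subseteq> (SIGMA j:{1..n-1}. sep_perms j \<times> sep_skew_indec (n - j))"
    using skew_split_sep_perms(1) by blast
qed (auto intro!: skew_split_skew_sum skew_split_sep_perms(2))

lemma sum_Sigma_product:
  fixes f :: "'b \<Rightarrow> 'a::comm_semiring_1" and g :: "'c \<Rightarrow> 'a"
  assumes "finite I" "\<And>i. finite (A i)" "\<And>i. finite (B i)"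
  shows "(\<Sum>(i, a, b) \<in> (SIGMA i:I. A i \<times> B i). f a * g b) = (\<Sum>i\<in>I. sum f (A i) * sum g (B i))"
proof -
  have "(\<Sum>i\<in>I. sum f (A i) * sum g (B i)) = (\<Sum>i\<in>I. \<Sum>(a, b)\<in>A i \<times> B i. f a * g b)"
    by (simp add: sum_product sum.cartesian_product)
  also have "\<dots> = (\<Sum>(i, a, b) \<in> (SIGMA i:I. A i \<times> B i). f a * g b)"
    by (rule sum.Sigma) (use assms in auto)
  finally show ?thesis ..
qed

lemma finite_sep_direct_indec: "finite (sep_direct_indec n)"
  using finite_sep_perms by (simp add: sep_direct_indec_def)

lemma finite_sep_skew_indec: "finite (sep_skew_indec n)"
  using finite_sep_perms by (simp add: sep_skew_indec_def)

lemma sum_des_direct_decomposable: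
  "(\<Sum>\<pi> | \<pi> \<in> sep_perms n \<and> direct_decomposable \<pi>. t ^ des \<pi>)
     = (\<Sum>j=1..n-1. S j t * (\<Sum>\<tau>\<in>sep_direct_indec (n - j). t ^ des \<tau>))"
proof -
  let ?I = "SIGMA j:{1..n-1}. sep_perms j \<times> sep_direct_indec (n - j)"
  have "(\<Sum>\<pi> | \<pi> \<in> sep_perms n \<and> direct_decomposable \<pi>. t ^ des \<pi>)
      = (\<Sum>x\<in>?I. t ^ des ((\<lambda>(j, \<sigma>, \<tau>). direct_sum \<sigma> \<tau>) x))"
    by (rule sum.reindex_bij_betw[OF bij_betw_direct_sum, symmetric])
  also have "\<dots> = (\<Sum>(j, \<sigma>, \<tau>)\<in>?I. t ^ des \<sigma> * t ^ des \<tau>)"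
    by (rule sum.cong) (auto simp: direct_sum_sep_perms(2) sep_direct_indec_def power_add)
  also have "\<dots> = (\<Sum>j=1..n-1. S j t * (\<Sum>\<tau>\<in>sep_direct_indec (n - j). t ^ des \<tau>))"
    by (simp add: sum_Sigma_product finite_sep_perms finite_sep_direct_indec S_def)
  finally show ?thesis .
qed

lemma sum_des_skew_decomposable:
  "(\<Sum>\<pi> | \<pi> \<in> sep_perms n \<and> skew_decomposable \<pi>. t ^ des \<pi>)
     = t * (\<Sum>j=1..n-1. S j t * (\<Sum>\<tau>\<in>sep_skew_indec (n - j). t ^ des \<tau>))"
proof -
  let ?I = "SIGMA j:{1..n-1}. sep_perms j \<times> sep_skew_indec (n - j)"
  have "(\<Sum>\<pi> | \<pi> \<in> sep_perms n \<and> skew_decomposable \<pi>. t ^ des \<pi>)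
      = (\<Sum>x\<in>?I. t ^ des ((\<lambda>(j, \<sigma>, \<tau>). skew_sum \<sigma> \<tau>) x))"
    by (rule sum.reindex_bij_betw[OF bij_betw_skew_sum, symmetric])
  also have "\<dots> = (\<Sum>(j, \<sigma>, \<tau>)\<in>?I. t * (t ^ des \<sigma> * t ^ des \<tau>))"
    by (rule sum.cong) (auto simp: skew_sum_sep_perms(2) sep_skew_indec_def power_add mult_ac)
  also have "\<dots> = t * (\<Sum>(j, \<sigma>, \<tau>)\<in>?I. t ^ des \<sigma> * t ^ des \<tau>)"
    by (simp add: sum_distrib_left split_def)
  also have "\<dots> = t * (\<Sum>j=1..n-1. S j t * (\<Sum>\<tau>\<in>sep_skew_indec (n - j). t ^ des \<tau>))"
    by (simp add: sum_Sigma_product finite_sep_perms finite_sep_skew_indec S_def)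
  finally show ?thesis .
qed

lemma S_eq_sum_indec:
  assumes n: "2 \<le> n"
  shows "S n t = (\<Sum>\<pi>\<in>sep_skew_indec n. t ^ des \<pi>) + (\<Sum>\<pi>\<in>sep_direct_indec n. t ^ des \<pi>)"
proof -
  have "sep_perms n = sep_skew_indec n \<union> sep_direct_indec n"
    using sep_perms_decomposable[OF _ n] by (auto simp: sep_skew_indec_eq_direct_decomposable[OF n] sep_direct_indec_eq_skew_decomposable[OF n])
  moreover have "sep_skew_indec n \<inter> sep_direct_indec n = {}"
    using not_direct_and_skew_decomposable by (auto simp: sep_skew_indec_eq_direct_decomposable[OF n] sep_direct_indec_eq_skew_decomposable[OF n])
  ultimately show ?thesis
    unfolding S_def by (simp add: sum.union_disjoint finite_sep_skew_indec finite_sep_direct_indec)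
qed

section \<open>Di-sk trees\<close>

lemma finite_nodes: "finite {T. nodes T = k}"
proof (induction k rule: less_induct)
  case (less k)
  show ?case
  proof (cases k)
    case 0
    hence "{T. nodes T = k} = {Leaf}" by (auto elim: nodes.elims)
    thus ?thesis by simp
  next
    case (Suc k')
    have "{T. nodes T = k} \<subseteq> (\<lambda>(l, s, r). Node l s r) `
        (\<Union>j\<le>k'. {l. nodes l = j} \<times> UNIV \<times> {r. nodes r = k' - j})"
    proof
      fix T assume "T \<in> {T. nodes T = k}"
      then obtain l s r where "T = Node l s r" "nodes l + 1 + nodes r = Suc k'"
        using Suc by (cases T) auto
      thus "T \<in> (\<lambda>(l, s, r). Node l s r) ` (\<Union>j\<le>k'. {l. nodes l = j} \<times> UNIV \<times> {r. nodes r = k' - j})"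
        by (intro image_eqI[of _ _ "(l, s, r)"]) auto
    qed
    moreover have "finite (UNIV :: sign set)"
      by (rule finite_subset[of _ "{Plus, Minus}"]) (use sign.exhaust in auto)
    hence "finite (\<Union>j\<le>k'. {l. nodes l = j} \<times> (UNIV :: sign set) \<times> {r. nodes r = k' - j})"
      using less.IH Suc by (intro finite_UN_I finite_cartesian_product) simp_all
    ultimately show ?thesis using finite_subset by blast
  qed
qed

lemma finite_DT: "finite (DT n)"
  unfolding DT_def by (rule finite_subset[OF _ finite_nodes[of "n - 1"]]) auto

lemma DT_one: "DT 1 = {Leaf}"
  by (auto simp: DT_def elim: nodes.elims)

lemma DT_root_not_eq:
  assumes "2 \<le> n" "s' \<noteq> s"
  shows "{T \<in> DT n. root_label T \<noteq> Some s} = {T \<in> DT n. root_label T = Some s'}"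
proof -
  have "root_label T = Some s'" if T: "T \<in> DT n" "root_label T \<noteq> Some s" for T
  proof (cases T)
    case Leaf
    thus ?thesis using T(1) assms(1) by (simp add: DT_def)
  next
    case (Node l x r)
    hence "x \<noteq> s" using T(2) by simp
    hence "x = s'" using assms(2) by (cases x; cases s; cases s') simp_all
    thus ?thesis using Node by simp
  qed
  thus ?thesis using assms(2) by auto
qed

definition DT_sum :: "nat \<Rightarrow> 'a::comm_semiring_1 \<Rightarrow> 'a" where
  "DT_sum n t = (\<Sum>T\<in>DT n. t ^ n_minus T)"

definition root_split :: "stree \<Rightarrow> nat \<times> stree \<times> stree" where
  "root_split T = (case T of Node l _ r \<Rightarrow> (nodes l + 1, l, r) | Leaf \<Rightarrow> undefined)"

lemma bij_betw_Node:
  "bij_betw (\<lambda>(j, l, r). Node l s r) (SIGMA j:{1..n-1}. DT j \<times> {T \<in> DT (n - j). root_label T \<noteq> Some s})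
     {T \<in> DT n. root_label T = Some s}"
proof (rule bij_betw_byWitness[where f' = root_split])
  show "\<forall>x \<in> SIGMA j:{1..n-1}. DT j \<times> {T \<in> DT (n - j). root_label T \<noteq> Some s}.
      root_split ((\<lambda>(j, l, r). Node l s r) x) = x"
    by (auto simp: root_split_def DT_def)
  show "\<forall>T \<in> {T \<in> DT n. root_label T = Some s}. (\<lambda>(j, l, r). Node l s r) (root_split T) = T"
  proof
    fix T assume "T \<in> {T \<in> DT n. root_label T = Some s}"
    thus "(\<lambda>(j, l, r). Node l s r) (root_split T) = T" by (cases T) (auto simp: root_split_def)
  qed
  show "(\<lambda>(j, l, r). Node l s r) ` (SIGMA j:{1..n-1}. DT j \<times> {T \<in> DT (n - j). root_label T \<noteq> Some s})
      \<subseteq> {T \<in> DT n. root_label T = Some s}"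
  proof clarify
    fix j l r assume a: "j \<in> {1..n-1}" "l \<in> DT j" "r \<in> DT (n - j)" "root_label r \<noteq> Some s"
    have "is_disk (Node l s r)" using a by (cases r) (auto simp: DT_def)
    thus "Node l s r \<in> DT n \<and> root_label (Node l s r) = Some s" using a by (auto simp: DT_def)
  qed
  show "root_split ` {T \<in> DT n. root_label T = Some s}
      \<subseteq> (SIGMA j:{1..n-1}. DT j \<times> {T \<in> DT (n - j). root_label T \<noteq> Some s})"
  proof
    fix y assume "y \<in> root_split ` {T \<in> DT n. root_label T = Some s}"
    then obtain T where T: "T \<in> DT n" "root_label T = Some s" and y: "y = root_split T" by auto
    from T obtain l r where "T = Node l s r" by (cases T) auto
    moreover have "is_disk l" "is_disk r" "root_label r \<noteq> Some s" "nodes l + 1 + nodes r = n - 1"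
      using T calculation by (auto simp: DT_def split: stree.splits)
    ultimately show "y \<in> (SIGMA j:{1..n-1}. DT j \<times> {T \<in> DT (n - j). root_label T \<noteq> Some s})"
      using y by (auto simp: root_split_def DT_def)
  qed
qed

lemma sum_DT_root:
  "(\<Sum>T | T \<in> DT n \<and> root_label T = Some s. t ^ n_minus T)
     = (if s = Minus then t else 1) *
       (\<Sum>j=1..n-1. DT_sum j t * (\<Sum>T | T \<in> DT (n - j) \<and> root_label T \<noteq> Some s. t ^ n_minus T))"
proof -
  let ?c = "if s = Minus then t else 1"
  let ?I = "SIGMA j:{1..n-1}. DT j \<times> {T \<in> DT (n - j). root_label T \<noteq> Some s}"
  have "(\<Sum>T | T \<in> DT n \<and> root_label T = Some s. t ^ n_minus T)
      = (\<Sum>x\<in>?I. t ^ n_minus ((\<lambda>(j, l, r). Node l s r) x))"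
    by (rule sum.reindex_bij_betw[OF bij_betw_Node, symmetric])
  also have "\<dots> = ?c * (\<Sum>(j, l, r)\<in>?I. t ^ n_minus l * t ^ n_minus r)"
    by (simp add: sum_distrib_left split_def power_add mult_ac)
  also have "\<dots> = ?c * (\<Sum>j=1..n-1. DT_sum j t * (\<Sum>T | T \<in> DT (n - j) \<and> root_label T \<noteq> Some s. t ^ n_minus T))"
    by (simp add: sum_Sigma_product finite_DT DT_sum_def)
  finally show ?thesis .
qed

lemma S1_eq_sum_root_not_Minus:
  assumes "1 \<le> n"
  shows "S1 n t = (\<Sum>T | T \<in> DT n \<and> root_label T \<noteq> Some Minus. t ^ n_minus T)"
proof (cases "n = 1")
  case True
  hence "DT n = {Leaf}" using DT_one by simp
  moreover have "{T \<in> {Leaf}. root_label T \<noteq> Some Minus} = {Leaf}" by auto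
  ultimately show ?thesis using True by (simp add: S1_def)
next
  case False
  hence "{T \<in> DT n. root_label T \<noteq> Some Minus} = DT_plus n"
    using assms DT_root_not_eq[of n Plus Minus] by (simp add: DT_plus_def)
  thus ?thesis using False by (simp add: S1_def)
qed

lemma S2_eq_sum_root_not_Plus:
  assumes "1 \<le> n"
  shows "S2 n t = (\<Sum>T | T \<in> DT n \<and> root_label T \<noteq> Some Plus. t ^ n_minus T)"
proof (cases "n = 1")
  case True
  hence "DT n = {Leaf}" using DT_one by simp
  moreover have "{T \<in> {Leaf}. root_label T \<noteq> Some Plus} = {Leaf}" by auto
  ultimately show ?thesis using True by (simp add: S2_def)
next
  case False
  hence "{T \<in> DT n. root_label T \<noteq> Some Plus} = DT_minus n"
    using assms DT_root_not_eq[of n Minus Plus] by (simp add: DT_minus_def)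
  thus ?thesis using False by (simp add: S2_def)
qed

lemma S1_rec:
  assumes "2 \<le> n"
  shows "S1 n t = (\<Sum>j=1..n-1. DT_sum j t * S2 (n - j) t)"
proof -
  have "S1 n t = (\<Sum>j=1..n-1. DT_sum j t *
      (\<Sum>T | T \<in> DT (n - j) \<and> root_label T \<noteq> Some Plus. t ^ n_minus T))"
    using assms sum_DT_root[where n = n and s = Plus] by (simp add: S1_def DT_plus_def)
  also have "\<dots> = (\<Sum>j=1..n-1. DT_sum j t * S2 (n - j) t)"
    by (rule sum.cong) (auto simp: S2_eq_sum_root_not_Plus)
  finally show ?thesis .
qed

lemma S2_rec:
  assumes "2 \<le> n"
  shows "S2 n t = t * (\<Sum>j=1..n-1. DT_sum j t * S1 (n - j) t)"
proof -
  have "S2 n t = t * (\<Sum>j=1..n-1. DT_sum j t *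
      (\<Sum>T | T \<in> DT (n - j) \<and> root_label T \<noteq> Some Minus. t ^ n_minus T))"
    using assms sum_DT_root[where n = n and s = Minus] by (simp add: S2_def DT_minus_def)
  also have "\<dots> = t * (\<Sum>j=1..n-1. DT_sum j t * S1 (n - j) t)"
    by (rule arg_cong[where f = "(*) t"], rule sum.cong) (auto simp: S1_eq_sum_root_not_Minus)
  finally show ?thesis .
qed

lemma disjoint_DT_plus_minus: "DT_plus n \<inter> DT_minus n = {}"
  by (auto simp: DT_plus_def DT_minus_def)

lemma DT_sum_eq_S1_plus_S2:
  assumes n: "2 \<le> n"
  shows "DT_sum n t = S1 n t + S2 n t"
proof -
  have "DT n = DT_plus n \<union> DT_minus n"
    using DT_root_not_eq[OF n, of Plus Minus] by (auto simp: DT_plus_def DT_minus_def)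
  hence "DT_sum n t = (\<Sum>T\<in>DT_plus n. t ^ n_minus T) + (\<Sum>T\<in>DT_minus n. t ^ n_minus T)"
    unfolding DT_sum_def by (metis sum.union_disjoint finite_Un finite_DT disjoint_DT_plus_minus)
  thus ?thesis using n by (simp add: S1_def S2_def)
qed

section \<open>Trees versus permutations\<close>

lemma DT_sum_eq_S_if_sum_indec:
  assumes "1 \<le> n" "S1 n t = (\<Sum>\<pi>\<in>sep_skew_indec n. t ^ des \<pi>)"
    "S2 n t = (\<Sum>\<pi>\<in>sep_direct_indec n. t ^ des \<pi>)"
  shows "DT_sum n t = S n t"
proof (cases "n = 1")
  case True
  thus ?thesis using DT_one sep_perms_one by (simp add: DT_sum_def S_def)
next
  case False
  hence "2 \<le> n" using assms(1) by simp
  thus ?thesis using assms(2,3) by (simp add: DT_sum_eq_S1_plus_S2 S_eq_sum_indec)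
qed

lemma S1_S2_eq_sum_indec:
  assumes "1 \<le> n"
  shows "S1 n t = (\<Sum>\<pi>\<in>sep_skew_indec n. t ^ des \<pi>) \<and> S2 n t = (\<Sum>\<pi>\<in>sep_direct_indec n. t ^ des \<pi>)"
  using assms
proof (induction n rule: less_induct)
  case (less n)
  show ?case
  proof (cases "n = 1")
    case True
    thus ?thesis using sep_skew_indec_one sep_direct_indec_one by (simp add: S1_def S2_def)
  next
    case False
    hence n: "2 \<le> n" using less.prems by simp
    have IH: "DT_sum j t = S j t \<and> S1 (n - j) t = (\<Sum>\<pi>\<in>sep_skew_indec (n - j). t ^ des \<pi>)
        \<and> S2 (n - j) t = (\<Sum>\<pi>\<in>sep_direct_indec (n - j). t ^ des \<pi>)" if "j \<in> {1..n-1}" for j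
    proof -
      have "DT_sum j t = S j t"
        using that n less.IH[of j] by (intro DT_sum_eq_S_if_sum_indec) auto
      moreover have "n - j < n" "1 \<le> n - j" using that n by auto
      ultimately show ?thesis using less.IH[of "n - j"] by simp
    qed
    have "S1 n t = (\<Sum>j=1..n-1. S j t * (\<Sum>\<tau>\<in>sep_direct_indec (n - j). t ^ des \<tau>))"
      unfolding S1_rec[OF n] by (rule sum.cong) (simp_all add: IH)
    also have "\<dots> = (\<Sum>\<pi> | \<pi> \<in> sep_perms n \<and> direct_decomposable \<pi>. t ^ des \<pi>)"
      by (rule sum_des_direct_decomposable[symmetric])
    also have "\<dots> = (\<Sum>\<pi>\<in>sep_skew_indec n. t ^ des \<pi>)"
      by (simp add: sep_skew_indec_eq_direct_decomposable[OF n])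
    finally have S1: "S1 n t = (\<Sum>\<pi>\<in>sep_skew_indec n. t ^ des \<pi>)" .
    have "S2 n t = t * (\<Sum>j=1..n-1. S j t * (\<Sum>\<tau>\<in>sep_skew_indec (n - j). t ^ des \<tau>))"
      unfolding S2_rec[OF n] by (rule arg_cong[where f = "(*) t"], rule sum.cong) (simp_all add: IH)
    also have "\<dots> = (\<Sum>\<pi> | \<pi> \<in> sep_perms n \<and> skew_decomposable \<pi>. t ^ des \<pi>)"
      by (rule sum_des_skew_decomposable[symmetric])
    also have "\<dots> = (\<Sum>\<pi>\<in>sep_direct_indec n. t ^ des \<pi>)"
      by (simp add: sep_direct_indec_eq_skew_decomposable[OF n])
    finally show ?thesis using S1 by simp
  qed
qed

lemma DT_sum_eq_S: "1 \<le> n \<Longrightarrow> DT_sum n t = S n t"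
  using S1_S2_eq_sum_indec by (blast intro: DT_sum_eq_S_if_sum_indec)

theorem lemma5p9:
  fixes t :: "'a::comm_semiring_1" and n :: nat
  assumes "n \<ge> 2"
  shows "S1 n t = (\<Sum>j=1..n-1. S j t * S2 (n - j) t)
    \<and> S2 n t = t * (\<Sum>j=1..n-1. S j t * S1 (n - j) t)"
proof
  have DT_sum: "DT_sum j t = S j t" if "j \<in> {1..n-1}" for j
    using that by (intro DT_sum_eq_S) simp
  show "S1 n t = (\<Sum>j=1..n-1. S j t * S2 (n - j) t)"
    unfolding S1_rec[OF assms] by (rule sum.cong) (simp_all add: DT_sum)
  show "S2 n t = t * (\<Sum>j=1..n-1. S j t * S1 (n - j) t)"
    unfolding S2_rec[OF assms] by (rule arg_cong[where f = "(*) t"], rule sum.cong) (simp_all add: DT_sum)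
qed

end
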